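(* Assume $-a_i+1\notin\mathbb{N}_0$ for $i\in\{1,\dots,M\}$, $-b_j\notin\mathbb{N}_0$ for $j\in\{1,\dots,N\}$, and that all denominators below are nonzero. Then for $n\in\mathbb{N}$ the Geronimus transformed orthogonal polynomials satisfy $$ {}_iT^{-1}P_n(z)=P_n(z)-\frac{Q_n(-a_i+1)}{Q_{n-1}(-a_i+1)}P_{n-1}(z),\qquad i\in\{1,\dots,M\},$$ $$T_j^{-1}P_n(z)=P_n(z)-\frac{Q_n(-b_j)}{Q_{n-1}(-b_j)}P_{n-1}(z),\qquad j\in\{1,\dots,N\},$$ $$T^{-1}P_n(z)=P_n(z-1)-\frac{\Upsilon Q_n(-1)-P_n(-1)}{\Upsilon Q_{n-1}(-1)-P_{n-1}(-1)}P_{n-1}(z-1),$$ where $\Upsilon:=\eta\,\prod_{i=1}^M(a_i-1)\big/\prod_{j=1}^N(b_j-1)$.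
   Context: Fix integers $M,N\ge0$ and parameters $\eta,a_1,\dots,a_M,b_1,\dots,b_N$. Let $w(z)=\frac{(a_1)_z\cdots(a_M)_z}{\Gamma(z+1)(b_1)_z\cdots(b_N)_z}\eta^z$, $(\alpha)_z=\Gamma(\alpha+z)/\Gamma(\alpha)$, on nodes $k\in\mathbb{N}_0$, with finite moments $\rho_n=\sum_kk^nw(k)$ and moment matrix $(\rho_{n+m})_{n,m\ge0}$ with all leading principal minors nonzero. $P_n$ is the monic polynomial of degree $n$ with $\sum_kP_n(k)P_m(k)w(k)=\delta_{n,m}H_n$, $H_n\ne0$, and $Q_n(z)=\sum_{k=0}^\infty\frac{P_n(k)w(k)}{z-k}$ is the second kind function. Inverse parameter shifts: ${}_iT^{-1}P_n$ is $P_n$ computed with $a_i$ replaced by $a_i-1$; $T_j^{-1}P_n$ with $b_j$ replaced by $b_j+1$; $T^{-1}P_n$ with every $a_i$ replaced by $a_i-1$ and every $b_j$ by $b_j-1$. It is assumed these shifted weights are well defined, with finite moments and nonzero Hankel determinants. *)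

theory Defs
  imports "HOL-Analysis.Analysis" "HOL-Computational_Algebra.Polynomial"
begin

definition poch :: "complex \<Rightarrow> complex \<Rightarrow> complex" where
  "poch \<alpha> z = Gamma (\<alpha> + z) / Gamma \<alpha>"

definition wt :: "complex list \<Rightarrow> complex list \<Rightarrow> complex \<Rightarrow> nat \<Rightarrow> complex" where
  "wt as bs \<eta> k =
     prod_list (map (\<lambda>a. poch a (of_nat k)) as) /
     (Gamma (of_nat k + 1) * prod_list (map (\<lambda>b. poch b (of_nat k)) bs)) * \<eta> ^ k"

definition moment :: "(nat \<Rightarrow> complex) \<Rightarrow> nat \<Rightarrow> complex" where
  "moment w n = (\<Sum>k. of_nat k ^ n * w k)"

definition hankel_det :: "(nat \<Rightarrow> complex) \<Rightarrow> nat \<Rightarrow> complex" where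
  "hankel_det w n =
     (\<Sum>p | p permutes {..<n}. of_int (sign p) * (\<Prod>i<n. moment w (i + p i)))"

definition good_weight :: "(nat \<Rightarrow> complex) \<Rightarrow> bool" where
  "good_weight w \<longleftrightarrow>
     (\<forall>n. summable (\<lambda>k. norm (of_nat k ^ n * w k))) \<and>
     (\<forall>n\<ge>1. hankel_det w n \<noteq> 0)"

definition is_MOPS :: "(nat \<Rightarrow> complex) \<Rightarrow> (nat \<Rightarrow> complex poly) \<Rightarrow> bool" where
  "is_MOPS w P \<longleftrightarrow>
     (\<forall>n. degree (P n) = n \<and> lead_coeff (P n) = 1) \<and>
     (\<exists>H. (\<forall>n. H n \<noteq> 0) \<and>
        (\<forall>n m. (\<Sum>k. poly (P n) (of_nat k) * poly (P m) (of_nat k) * w k)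
                 = (if n = m then H n else 0)))"

definition OP :: "(nat \<Rightarrow> complex) \<Rightarrow> nat \<Rightarrow> complex poly" where
  "OP w = (THE P. is_MOPS w P)"

definition Qfun :: "(nat \<Rightarrow> complex) \<Rightarrow> nat \<Rightarrow> complex \<Rightarrow> complex" where
  "Qfun w n z = (\<Sum>k. poly (OP w n) (of_nat k) * w k / (z - of_nat k))"

end

(* Each shifted weight w' is a Geronimus transform of w: on the nodes, w'(k) (k - \<zeta>) = \<lambda> w(k)
   with \<zeta> = 1 - a_i or \<zeta> = -b_j; for T^-1 the same holds with \<zeta> = 0 once w is moved one
   node to the right, up to a point mass w'(0) at the node 0.
   Let A = P_n - c P_(n-1) and deg p < n. Writing p = (x - \<zeta>) s + p(\<zeta>) with deg s < n - 1, the
   w'-moment of A p is \<lambda> times the w-moment of A s, which vanishes by orthogonality, plus p(\<zeta>)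
   times the w'-moment of A. The latter is a combination of the second kind functions
   Q_n(\<zeta>), Q_(n-1)(\<zeta>) (and, for T^-1, of P_n(-1), P_(n-1)(-1)); the stated c is the one
   that makes it vanish. As the Hankel determinants of w' do not vanish, the monic orthogonal
   polynomial of degree n for w' is unique, hence equal to A. *)

theory Submission
  imports Defs "Jordan_Normal_Form.Determinant"
begin

section \<open>The moment functional of a discrete weight\<close>

definition finite_moments :: "(nat \<Rightarrow> complex) \<Rightarrow> bool" where
  "finite_moments w \<longleftrightarrow> (\<forall>n. summable (\<lambda>k. norm (of_nat k ^ n * w k)))"

definition moment_functional :: "(nat \<Rightarrow> complex) \<Rightarrow> complex poly \<Rightarrow> complex" where
  "moment_functional w p = (\<Sum>k. poly p (of_nat k) * w k)"

definition orth_below :: "(nat \<Rightarrow> complex) \<Rightarrow> complex poly \<Rightarrow> nat \<Rightarrow> bool" where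
  "orth_below w q n \<longleftrightarrow> (\<forall>p. degree p < n \<longrightarrow> moment_functional w (q * p) = 0)"

lemma good_weight_iff:
  "good_weight w \<longleftrightarrow> finite_moments w \<and> (\<forall>n\<ge>1. hankel_det w n \<noteq> 0)"
  unfolding good_weight_def finite_moments_def ..

lemma poly_eq_sum_lessThan:
  fixes p :: "complex poly"
  assumes "\<And>j. n \<le> j \<Longrightarrow> coeff p j = 0"
  shows "poly p x = (\<Sum>l<n. coeff p l * x ^ l)"
proof (cases "p = 0")
  case False
  then have "degree p < n"
    using assms leading_coeff_0_iff not_less by blast
  then show ?thesis
    unfolding poly_altdef using assms
    by (intro sum.mono_neutral_cong_left) (auto intro: le_degree)
qed simp

lemma summable_norm_poly_weight:
  assumes "finite_moments w"
  shows "summable (\<lambda>k. norm (poly p (of_nat k) * w k))"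
proof (rule summable_comparison_test')
  show "summable (\<lambda>k. \<Sum>i\<le>degree p. norm (coeff p i) * norm (of_nat k ^ i * w k))"
    using assms unfolding finite_moments_def by (intro summable_sum summable_mult) blast
  show "norm (norm (poly p (of_nat k) * w k))
          \<le> (\<Sum>i\<le>degree p. norm (coeff p i) * norm (of_nat k ^ i * w k))" for k
    unfolding poly_altdef sum_distrib_right
    by (simp add: mult.assoc norm_mult[symmetric] norm_sum del: norm_mult)
qed

lemma summable_poly_weight:
  "finite_moments w \<Longrightarrow> summable (\<lambda>k. poly p (of_nat k) * w k)"
  by (rule summable_norm_cancel[OF summable_norm_poly_weight])

lemma moment_functional_add:
  "finite_moments w \<Longrightarrow> moment_functional w (p + q) = moment_functional w p + moment_functional w q"
  unfolding moment_functional_def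
  by (simp add: distrib_right suminf_add[OF summable_poly_weight summable_poly_weight])

lemma moment_functional_diff:
  "finite_moments w \<Longrightarrow> moment_functional w (p - q) = moment_functional w p - moment_functional w q"
  unfolding moment_functional_def
  by (simp add: left_diff_distrib suminf_diff[OF summable_poly_weight summable_poly_weight])

lemma moment_functional_smult:
  "finite_moments w \<Longrightarrow> moment_functional w (Polynomial.smult c p) = c * moment_functional w p"
  unfolding moment_functional_def
  by (simp add: mult.assoc suminf_mult[OF summable_poly_weight])

lemma moment_functional_monom:
  "moment_functional w (monom 1 n) = moment w n"
  by (simp add: moment_functional_def moment_def poly_monom)

section \<open>Hankel matrices and monic orthogonal polynomials\<close>

definition hankel_mat :: "(nat \<Rightarrow> complex) \<Rightarrow> nat \<Rightarrow> complex mat" where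
  "hankel_mat w n = mat n n (\<lambda>(i, j). moment w (i + j))"

lemma hankel_det_eq_det: "hankel_det w n = det (hankel_mat w n)"
  unfolding hankel_det_def hankel_mat_def det_def
  by (auto simp: atLeast0LessThan permutes_in_image intro!: sum.cong prod.cong)

lemma hankel_mat_mult_coeffs:
  assumes w: "finite_moments w" and p: "\<And>j. n \<le> j \<Longrightarrow> coeff p j = 0" and i: "i < n"
  shows "(hankel_mat w n *\<^sub>v vec n (coeff p)) $ i = moment_functional w (monom 1 i * p)"
proof -
  have summable: "summable (\<lambda>k. of_nat k ^ j * w k)" for j
    using w unfolding finite_moments_def by (blast intro: summable_norm_cancel)
  have "moment_functional w (monom 1 i * p) = (\<Sum>k. \<Sum>l<n. coeff p l * (of_nat k ^ (i + l) * w k))"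
    using p unfolding moment_functional_def poly_mult poly_monom
    by (simp add: poly_eq_sum_lessThan[of n p] sum_distrib_left power_add mult_ac)
  also have "\<dots> = (\<Sum>l<n. coeff p l * moment w (i + l))"
    unfolding moment_def
    by (subst suminf_sum) (auto intro: summable_mult summable simp: suminf_mult[OF summable])
  finally show ?thesis
    using i by (simp add: hankel_mat_def scalar_prod_def atLeast0LessThan mult.commute)
qed

lemma orth_below_eq_0:
  assumes w: "finite_moments w" and det: "hankel_det w n \<noteq> 0"
    and deg: "degree d < n" and orth: "orth_below w d n"
  shows "d = 0"
proof (rule ccontr)
  assume "d \<noteq> 0"
  let ?v = "vec n (coeff d)"
  have "hankel_mat w n *\<^sub>v ?v = 0\<^sub>v n"
  proof (rule eq_vecI)
    fix i assume "i < dim_vec (0\<^sub>v n :: complex vec)"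
    then have "i < n" by simp
    moreover have "moment_functional w (monom 1 i * d) = 0"
      using orth \<open>i < n\<close> unfolding orth_below_def by (metis degree_monom_eq mult.commute zero_neq_one)
    ultimately show "(hankel_mat w n *\<^sub>v ?v) $ i = 0\<^sub>v n $ i"
      using deg by (simp add: hankel_mat_mult_coeffs[OF w] coeff_eq_0)
  qed (simp add: hankel_mat_def)
  moreover have "?v \<noteq> 0\<^sub>v n"
  proof
    assume "?v = 0\<^sub>v n"
    then have "?v $ degree d = 0" using deg by simp
    then show False using deg \<open>d \<noteq> 0\<close> by simp
  qed
  ultimately have "det (hankel_mat w n) = 0"
    by (subst det_0_iff_vec_prod_zero[of _ n]) (auto simp: hankel_mat_def intro!: exI[of _ ?v])
  then show False using det by (simp add: hankel_det_eq_det)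
qed

lemma orth_below_mono: "orth_below w q n \<Longrightarrow> m \<le> n \<Longrightarrow> orth_below w q m"
  unfolding orth_below_def by simp

lemma orth_below_diff_smult:
  assumes "finite_moments w" "orth_below w p n" "orth_below w q n"
  shows "orth_below w (p - Polynomial.smult c q) n"
  using assms unfolding orth_below_def
  by (simp add: left_diff_distrib moment_functional_diff moment_functional_smult)

lemma orth_belowI_monic_family:
  assumes w: "finite_moments w"
    and R: "\<And>j. j < n \<Longrightarrow> degree (R j) = j \<and> lead_coeff (R j) = 1"
    and orth: "\<And>j. j < n \<Longrightarrow> moment_functional w (q * R j) = 0"
  shows "orth_below w q n"
  unfolding orth_below_def
proof (intro allI impI)
  fix p :: "complex poly"
  show "degree p < n \<Longrightarrow> moment_functional w (q * p) = 0"
  proof (induction "degree p" arbitrary: p rule: less_induct)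
    case less
    define d where "d = degree p"
    define r where "r = p - Polynomial.smult (coeff p d) (R d)"
    have "degree (R d) = d \<and> lead_coeff (R d) = 1"
      using R[of d] less.prems unfolding d_def by blast
    then have Rd: "degree (R d) = d" "coeff (R d) d = 1"
      by metis+
    have "degree r \<le> d"
      unfolding r_def using Rd d_def
      by (intro degree_diff_le) (auto intro: order.trans[OF degree_smult_le])
    moreover have "coeff r d = 0"
      using Rd by (simp add: r_def)
    ultimately have r: "r = 0 \<or> degree r < degree p"
      unfolding d_def by (metis leading_coeff_0_iff le_neq_implies_less)
    have "q * p = q * r + Polynomial.smult (coeff p d) (q * R d)"
      by (simp add: r_def algebra_simps)
    then have "moment_functional w (q * p) = moment_functional w (q * r)"
      using orth less.prems by (simp add: moment_functional_add[OF w] moment_functional_smult[OF w] d_def)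
    also have "\<dots> = 0"
      using r less by (auto simp: moment_functional_def)
    finally show ?case .
  qed
qed

lemma exists_monic_orth_below:
  assumes w: "finite_moments w" and det: "hankel_det w m \<noteq> 0"
  shows "\<exists>p. degree p = m \<and> lead_coeff p = 1 \<and> orth_below w p m"
proof -
  let ?H = "hankel_mat w m"
  have H: "?H \<in> carrier_mat m m"
    by (simp add: hankel_mat_def)
  obtain B where B: "B \<in> carrier_mat m m" and HB: "?H * B = 1\<^sub>m m"
    using det_non_zero_imp_unit[OF H det[unfolded hankel_det_eq_det]]
    by (auto simp: Units_def ring_mat_def)
  \<comment> \<open>the lower coefficients of \<open>p\<close> solve the Hankel system \<open>H x = -(\<mu>\<^sub>m\<^sub>+\<^sub>i)\<^sub>i\<close>\<close>
  define x where "x = B *\<^sub>v vec m (\<lambda>i. - moment w (m + i))"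
  have Hx: "?H *\<^sub>v x = vec m (\<lambda>i. - moment w (m + i))"
    unfolding x_def using H B HB by (simp flip: assoc_mult_mat_vec)
  define d where "d = (\<Sum>l<m. monom (x $ l) l)"
  have coeff_d: "coeff d j = (if j < m then x $ j else 0)" for j
    by (simp add: d_def coeff_sum coeff_monom)
  have x_eq: "vec m (coeff d) = x"
    using B by (intro eq_vecI) (auto simp: x_def coeff_d)
  define p where "p = monom 1 m + d"
  have coeff_p: "coeff p j = (if j = m then 1 else if j < m then x $ j else 0)" for j
    by (simp add: p_def coeff_d coeff_monom)
  have "degree p = m"
    using coeff_p by (intro antisym degree_le le_degree) auto
  moreover have "lead_coeff p = 1"
    using \<open>degree p = m\<close> coeff_p by simp
  moreover have "orth_below w p m"
  proof (rule orth_belowI_monic_family[OF w, of _ "monom 1"])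
    fix i assume i: "i < m"
    have "p * monom 1 i = monom 1 (m + i) + monom 1 i * d"
      by (simp add: p_def mult_monom algebra_simps)
    then have "moment_functional w (p * monom 1 i) = moment w (m + i) + (?H *\<^sub>v vec m (coeff d)) $ i"
      using i coeff_d
      by (simp add: moment_functional_add[OF w] moment_functional_monom hankel_mat_mult_coeffs[OF w])
    then show "moment_functional w (p * monom 1 i) = 0"
      using i by (simp add: x_eq Hx)
  qed (simp add: degree_monom_eq)
  ultimately show ?thesis by blast
qed

lemma good_weight_hankel_det_nonzero:
  assumes "good_weight w"
  shows "hankel_det w n \<noteq> 0"
proof (cases "n = 0")
  case True
  then show ?thesis by (simp add: hankel_det_def permutes_empty)
qed (use assms in \<open>simp add: good_weight_iff\<close>)

lemma monic_orth_below_unique: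
  assumes w: "finite_moments w" and det: "hankel_det w n \<noteq> 0"
    and p: "degree p = n" "lead_coeff p = 1" "orth_below w p n"
    and q: "degree q = n" "lead_coeff q = 1" "orth_below w q n"
  shows "p = q"
proof (rule ccontr)
  assume "p \<noteq> q"
  then have "degree (p - q) \<noteq> n"
    using p q by (metis coeff_diff diff_self leading_coeff_0_iff right_minus_eq)
  then have "degree (p - q) < n"
    using p q by (metis degree_diff_le order.order_iff_strict order_refl)
  moreover have "orth_below w (p - q) n"
    using orth_below_diff_smult[OF w p(3) q(3), of 1] by simp
  ultimately have "p - q = 0"
    by (rule orth_below_eq_0[OF w det])
  with \<open>p \<noteq> q\<close> show False
    by simp
qed

lemma is_MOPS_orth_below:
  assumes w: "finite_moments w" and P: "is_MOPS w P"
  shows "orth_below w (P n) n"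
proof (rule orth_belowI_monic_family[OF w, of _ P])
  show "degree (P j) = j \<and> lead_coeff (P j) = 1" for j
    using P unfolding is_MOPS_def by blast
  show "moment_functional w (P n * P j) = 0" if "j < n" for j
    using P that unfolding is_MOPS_def moment_functional_def by (auto simp: mult.assoc)
qed

lemma exists_is_MOPS:
  assumes "good_weight w"
  shows "\<exists>P. is_MOPS w P"
proof -
  have w: "finite_moments w"
    using assms by (simp add: good_weight_iff)
  note det = good_weight_hankel_det_nonzero[OF assms]
  define P where "P m = (SOME p. degree p = m \<and> lead_coeff p = 1 \<and> orth_below w p m)" for m
  have P: "degree (P m) = m \<and> lead_coeff (P m) = 1 \<and> orth_below w (P m) m" for m
    unfolding P_def by (rule someI_ex[OF exists_monic_orth_below[OF w det]])
  have cross: "moment_functional w (P n * P m) = 0" if "m < n" for n m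
    using P[of n] P[of m] that unfolding orth_below_def by simp
  have nondegenerate: "moment_functional w (P n * P n) \<noteq> 0" for n
  proof
    assume "moment_functional w (P n * P n) = 0"
    then have "orth_below w (P n) (Suc n)"
    proof (intro orth_belowI_monic_family[OF w, of _ P])
      show "degree (P j) = j \<and> lead_coeff (P j) = 1" for j
        using P by blast
    qed (use cross in \<open>auto simp: less_Suc_eq\<close>)
    then have "P n = 0"
      using P[of n] by (intro orth_below_eq_0[OF w det]) auto
    then show False
      using P[of n] by simp
  qed
  have "is_MOPS w P"
    unfolding is_MOPS_def
  proof (intro conjI allI exI[of _ "\<lambda>n. moment_functional w (P n * P n)"])
    show "(\<Sum>k. poly (P n) (of_nat k) * poly (P m) (of_nat k) * w k)
          = (if n = m then moment_functional w (P n * P n) else 0)" for n m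
      using cross[of m n] cross[of n m] by (cases n m rule: linorder_cases)
        (auto simp: moment_functional_def mult_ac)
  qed (use P nondegenerate in blast)+
  then show ?thesis
    by blast
qed

lemma is_MOPS_unique:
  assumes "good_weight w" "is_MOPS w P" "is_MOPS w R"
  shows "R = P"
proof
  fix n
  have w: "finite_moments w"
    using assms(1) by (simp add: good_weight_iff)
  have "degree (P n) = n" "lead_coeff (P n) = 1" "degree (R n) = n" "lead_coeff (R n) = 1"
    using assms(2,3) unfolding is_MOPS_def by blast+
  then show "R n = P n"
    using is_MOPS_orth_below[OF w assms(2)] is_MOPS_orth_below[OF w assms(3)]
    by (intro monic_orth_below_unique[OF w good_weight_hankel_det_nonzero[OF assms(1)]])
qed

lemma is_MOPS_OP:
  assumes "good_weight w"
  shows "is_MOPS w (OP w)"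
proof -
  obtain P where P: "is_MOPS w P"
    using exists_is_MOPS[OF assms] ..
  then have "OP w = P"
    unfolding OP_def using is_MOPS_unique[OF assms P] by (rule the_equality)
  with P show ?thesis
    by simp
qed

lemma
  assumes "good_weight w"
  shows degree_OP: "degree (OP w n) = n"
    and lead_coeff_OP: "lead_coeff (OP w n) = 1"
  using is_MOPS_OP[OF assms] unfolding is_MOPS_def by blast+

lemma orth_below_OP: "good_weight w \<Longrightarrow> orth_below w (OP w n) n"
  by (simp add: is_MOPS_orth_below is_MOPS_OP good_weight_iff)

lemma OP_eqI:
  assumes "good_weight w" "degree q = n" "lead_coeff q = 1" "orth_below w q n"
  shows "OP w n = q"
  using assms
  by (intro monic_orth_below_unique[of w n] good_weight_hankel_det_nonzero degree_OP lead_coeff_OP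
      orth_below_OP) (auto simp: good_weight_iff)

section \<open>Geronimus transformations\<close>

lemma monic_diff_smult_lower_degree:
  fixes A B :: "'a::comm_ring_1 poly"
  assumes "degree A = n" "lead_coeff A = 1" "degree B < n"
  shows "degree (A - Polynomial.smult c B) = n \<and> lead_coeff (A - Polynomial.smult c B) = 1"
proof -
  have lower: "degree (Polynomial.smult c B) < n"
    using assms(3) degree_smult_le le_less_trans by blast
  then have "degree (A - Polynomial.smult c B) = n"
    using degree_add_eq_left[of "- Polynomial.smult c B" A] assms(1) by simp
  with assms show ?thesis
    by (simp add: coeff_eq_0)
qed

lemma moment_functional_linear_factor:
  assumes w: "finite_moments w" and rel: "\<And>k. w' k * (of_nat k - \<zeta>) = c0 * w k"
  shows "moment_functional w' ([:-\<zeta>, 1:] * q) = c0 * moment_functional w q"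
proof -
  have termwise: "poly ([:-\<zeta>, 1:] * q) (of_nat k) * w' k = c0 * (poly q (of_nat k) * w k)" for k
  proof -
    have "poly ([:-\<zeta>, 1:] * q) (of_nat k) * w' k = poly q (of_nat k) * (w' k * (of_nat k - \<zeta>))"
      by (simp add: algebra_simps)
    then show ?thesis
      by (simp add: rel mult.left_commute)
  qed
  show ?thesis
    unfolding moment_functional_def termwise by (rule suminf_mult[OF summable_poly_weight[OF w]])
qed

lemma orth_below_geronimus:
  assumes w': "finite_moments w'"
    and factor: "\<And>q. moment_functional w' ([:-\<zeta>, 1:] * q) = c0 * moment_functional w q"
    and orth: "orth_below w A (n - 1)" and A: "moment_functional w' A = 0"
  shows "orth_below w' A n"
  unfolding orth_below_def
proof (intro allI impI)
  fix p :: "complex poly"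
  assume p: "degree p < n"
  define s where "s = synthetic_div p \<zeta>"
  have "A * p = [:-\<zeta>, 1:] * (A * s) + Polynomial.smult (poly p \<zeta>) A"
    by (subst synthetic_div_correct'[of \<zeta> p, symmetric]) (simp add: s_def algebra_simps)
  then have "moment_functional w' (A * p) = c0 * moment_functional w (A * s)"
    by (simp only: moment_functional_add[OF w'] moment_functional_smult[OF w'] factor A) simp
  moreover have "moment_functional w (A * s) = 0"
  proof (cases "degree p = 0")
    case True
    then have "s = 0"
      by (simp add: s_def synthetic_div_eq_0_iff)
    then show ?thesis
      by (simp add: moment_functional_def)
  next
    case False
    then have "degree s < n - 1"
      using p by (simp add: s_def degree_synthetic_div)
    then show ?thesis
      using orth unfolding orth_below_def by blast
  qed
  ultimately show "moment_functional w' (A * p) = 0"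
    by simp
qed

lemma moment_functional_divided_weight:
  assumes rel: "\<And>k. w' k * (of_nat k - \<zeta>) = c0 * w k" and node: "\<And>k. \<zeta> \<noteq> of_nat k"
    and summable: "summable (\<lambda>k. poly p (of_nat k) * w' k)"
  shows "moment_functional w' p = - c0 * (\<Sum>k. poly p (of_nat k) * w k / (\<zeta> - of_nat k))"
proof -
  have termwise: "poly p (of_nat k) * w' k = - c0 * (poly p (of_nat k) * w k / (\<zeta> - of_nat k))" for k
  proof -
    have "of_nat k - \<zeta> \<noteq> 0"
      using node[of k] by simp
    then have "w' k = c0 * w k / (of_nat k - \<zeta>)"
      by (simp flip: rel add: field_simps)
    then show ?thesis
      by (simp add: minus_divide_right)
  qed
  show ?thesis
  proof (cases "c0 = 0")
    case False
    have "summable (\<lambda>k. - c0 * (poly p (of_nat k) * w k / (\<zeta> - of_nat k)))"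
      using summable by (simp only: termwise)
    then have "summable (\<lambda>k. poly p (of_nat k) * w k / (\<zeta> - of_nat k))"
      by (rule summable_mult_D) (use False in simp)
    then show ?thesis
      unfolding moment_functional_def termwise by (rule suminf_mult)
  qed (simp add: moment_functional_def termwise)
qed

lemma geronimus_OP:
  assumes w: "good_weight w" and w': "good_weight w'" and n: "n \<ge> 1"
    and rel: "\<And>k. w' k * (of_nat k - \<zeta>) = c0 * w k" and node: "\<And>k. \<zeta> \<noteq> of_nat k"
    and den: "Qfun w (n - 1) \<zeta> \<noteq> 0"
  shows "OP w' n = OP w n - Polynomial.smult (Qfun w n \<zeta> / Qfun w (n - 1) \<zeta>) (OP w (n - 1))"
proof -
  have fm: "finite_moments w" "finite_moments w'"
    using w w' by (simp_all add: good_weight_iff)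
  define c where "c = Qfun w n \<zeta> / Qfun w (n - 1) \<zeta>"
  have Q: "moment_functional w' (OP w j) = - c0 * Qfun w j \<zeta>" for j
    unfolding Qfun_def using summable_poly_weight[OF fm(2)]
    by (rule moment_functional_divided_weight[OF rel node])
  have "orth_below w' (OP w n - Polynomial.smult c (OP w (n - 1))) n"
  proof (rule orth_below_geronimus[OF fm(2) moment_functional_linear_factor[OF fm(1) rel]])
    have "orth_below w (OP w n) (n - 1)"
      by (rule orth_below_mono[OF orth_below_OP[OF w]]) simp
    then show "orth_below w (OP w n - Polynomial.smult c (OP w (n - 1))) (n - 1)"
      by (intro orth_below_diff_smult[OF fm(1)] orth_below_OP[OF w])
    show "moment_functional w' (OP w n - Polynomial.smult c (OP w (n - 1))) = 0"
      using den by (simp add: moment_functional_diff[OF fm(2)] moment_functional_smult[OF fm(2)] Q c_def)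
  qed
  moreover have "degree (OP w (n - 1)) < n"
    using n by (simp add: degree_OP[OF w])
  ultimately show ?thesis
    unfolding c_def using monic_diff_smult_lower_degree degree_OP[OF w] lead_coeff_OP[OF w]
    by (metis OP_eqI[OF w'])
qed

definition shift_weight :: "(nat \<Rightarrow> complex) \<Rightarrow> nat \<Rightarrow> complex" where
  "shift_weight w k = (case k of 0 \<Rightarrow> 0 | Suc j \<Rightarrow> w j)"

lemma finite_moments_shift_weight:
  assumes "finite_moments w"
  shows "finite_moments (shift_weight w)"
  unfolding finite_moments_def
proof
  fix n
  have "summable (\<lambda>j. norm (poly ([:1, 1:] ^ n) (of_nat j) * w j))"
    by (rule summable_norm_poly_weight[OF assms])
  then show "summable (\<lambda>k. norm (of_nat k ^ n * shift_weight w k))"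
    by (subst summable_Suc_iff[symmetric]) (simp add: shift_weight_def add.commute)
qed

lemma moment_functional_shift_weight:
  assumes "finite_moments w"
  shows "moment_functional (shift_weight w) q = moment_functional w (q \<circ>\<^sub>p [:1, 1:])"
proof -
  have "(\<lambda>j. poly (q \<circ>\<^sub>p [:1, 1:]) (of_nat j) * w j) sums moment_functional w (q \<circ>\<^sub>p [:1, 1:])"
    unfolding moment_functional_def by (rule summable_sums[OF summable_poly_weight[OF assms]])
  then have "(\<lambda>k. poly q (of_nat k) * shift_weight w k)
               sums (moment_functional w (q \<circ>\<^sub>p [:1, 1:]) + poly q (of_nat 0) * shift_weight w 0)"
    by (subst sums_Suc_iff[symmetric]) (simp add: shift_weight_def poly_pcompose add.commute)
  then show ?thesis
    unfolding moment_functional_def by (simp add: shift_weight_def sums_iff)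
qed

lemma orth_below_shift_weight:
  assumes w: "finite_moments w" and orth: "orth_below w A n"
  shows "orth_below (shift_weight w) (A \<circ>\<^sub>p [:-1, 1:]) n"
  unfolding orth_below_def
proof (intro allI impI)
  fix p :: "complex poly"
  assume "degree p < n"
  then have "moment_functional w (A * (p \<circ>\<^sub>p [:1, 1:])) = 0"
    using orth unfolding orth_below_def by (simp add: degree_pcompose)
  moreover have "(A \<circ>\<^sub>p [:-1, 1:] * p) \<circ>\<^sub>p [:1, 1:] = A * (p \<circ>\<^sub>p [:1, 1:])"
    by (simp add: pcompose_mult pcompose_pCons flip: pcompose_assoc)
  ultimately show "moment_functional (shift_weight w) (A \<circ>\<^sub>p [:-1, 1:] * p) = 0"
    by (simp add: moment_functional_shift_weight[OF w])
qed

lemma moment_functional_pcompose_shift: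
  assumes w': "finite_moments w'" and w'0: "w' 0 = 1"
    and rel: "\<And>k. w' (Suc k) * (of_nat k + 1) = U * w k"
  shows "moment_functional w' (p \<circ>\<^sub>p [:-1, 1:])
           = poly p (-1) - U * (\<Sum>k. poly p (of_nat k) * w k / (-1 - of_nat k))"
proof -
  define f where "f = (\<lambda>k. poly (p \<circ>\<^sub>p [:-1, 1:]) (of_nat k) * w' k)"
  have f: "summable f"
    unfolding f_def by (rule summable_poly_weight[OF w'])
  have f_Suc: "(\<lambda>k. f (Suc k)) = (\<lambda>k. poly p (of_nat k) * w' (Suc k))"
    by (simp add: f_def poly_pcompose)
  have "moment_functional w' (p \<circ>\<^sub>p [:-1, 1:]) = f 0 + (\<Sum>k. f (Suc k))"
    using suminf_split_head[OF f] by (simp add: moment_functional_def f_def)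
  also have "f 0 = poly p (-1)"
    using w'0 by (simp add: f_def poly_pcompose)
  also have "(\<Sum>k. f (Suc k)) = moment_functional (\<lambda>k. w' (Suc k)) p"
    by (simp add: f_Suc moment_functional_def)
  also have "\<dots> = - U * (\<Sum>k. poly p (of_nat k) * w k / (-1 - of_nat k))"
  proof (rule moment_functional_divided_weight)
    show "w' (Suc k) * (of_nat k - -1) = U * w k" for k
      using rel[of k] by simp
    show "- 1 \<noteq> (of_nat k :: complex)" for k
    proof
      assume "- 1 = (of_nat k :: complex)"
      then have "Re (- 1) = Re (of_nat k)"
        by simp
      then show False
        by simp
    qed
    show "summable (\<lambda>k. poly p (of_nat k) * w' (Suc k))"
      using f by (simp flip: f_Suc add: summable_Suc_iff)
  qed
  finally show ?thesis
    by simp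
qed

lemma geronimus_shift_OP:
  assumes w: "good_weight w" and w': "good_weight w'" and n: "n \<ge> 1"
    and w'0: "w' 0 = 1" and rel: "\<And>k. w' (Suc k) * (of_nat k + 1) = U * w k"
    and den: "U * Qfun w (n - 1) (-1) - poly (OP w (n - 1)) (-1) \<noteq> 0"
  defines "c \<equiv> (U * Qfun w n (-1) - poly (OP w n) (-1)) / (U * Qfun w (n - 1) (-1) - poly (OP w (n - 1)) (-1))"
  shows "OP w' n = OP w n \<circ>\<^sub>p [:-1, 1:] - Polynomial.smult c (OP w (n - 1) \<circ>\<^sub>p [:-1, 1:])"
proof -
  have fm: "finite_moments w" "finite_moments w'"
    using w w' by (simp_all add: good_weight_iff)
  define A where "A = OP w n - Polynomial.smult c (OP w (n - 1))"
  have A_shift: "A \<circ>\<^sub>p [:-1, 1:] = OP w n \<circ>\<^sub>p [:-1, 1:] - Polynomial.smult c (OP w (n - 1) \<circ>\<^sub>p [:-1, 1:])"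
    by (simp add: A_def pcompose_diff pcompose_smult)
  have factor_rel: "w' k * (of_nat k - 0) = U * shift_weight w k" for k
    using rel by (cases k) (simp_all add: shift_weight_def add.commute)
  have Q: "moment_functional w' (OP w j \<circ>\<^sub>p [:-1, 1:]) = poly (OP w j) (-1) - U * Qfun w j (-1)" for j
    unfolding Qfun_def by (rule moment_functional_pcompose_shift[OF fm(2) w'0 rel])
  have "orth_below w' (A \<circ>\<^sub>p [:-1, 1:]) n"
  proof (rule orth_below_geronimus[OF fm(2)])
    show "moment_functional w' ([:-0, 1:] * q) = U * moment_functional (shift_weight w) q" for q
      by (rule moment_functional_linear_factor[OF finite_moments_shift_weight[OF fm(1)] factor_rel])
    have "orth_below w (OP w n) (n - 1)"
      by (rule orth_below_mono[OF orth_below_OP[OF w]]) simp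
    then have "orth_below w A (n - 1)"
      unfolding A_def by (intro orth_below_diff_smult[OF fm(1)] orth_below_OP[OF w])
    then show "orth_below (shift_weight w) (A \<circ>\<^sub>p [:-1, 1:]) (n - 1)"
      by (rule orth_below_shift_weight[OF fm(1)])
    show "moment_functional w' (A \<circ>\<^sub>p [:-1, 1:]) = 0"
      using den unfolding A_shift c_def
      by (simp add: moment_functional_diff[OF fm(2)] moment_functional_smult[OF fm(2)] Q field_simps)
  qed
  moreover have "degree (OP w j \<circ>\<^sub>p [:-1, 1:]) = j" "lead_coeff (OP w j \<circ>\<^sub>p [:-1, 1:]) = 1" for j
    using degree_OP[OF w, of j] lead_coeff_OP[OF w, of j] lead_coeff_comp[of "[:-1, 1:]" "OP w j"]
    by (simp_all add: degree_pcompose)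
  moreover have "n - 1 < n"
    using n by simp
  ultimately show ?thesis
    unfolding A_shift using monic_diff_smult_lower_degree by (metis OP_eqI[OF w'])
qed

section \<open>The hypergeometric weight\<close>

lemma poch_of_nat_eq_pochhammer: "z \<notin> \<int>\<^sub>\<le>\<^sub>0 \<Longrightarrow> poch z (of_nat k) = pochhammer z k"
  by (simp add: poch_def pochhammer_Gamma)

lemma diff_one_notin_nonpos_Ints:
  fixes z :: complex
  assumes "z \<notin> \<int>\<^sub>\<le>\<^sub>0" "z \<noteq> 1"
  shows "z - 1 \<notin> \<int>\<^sub>\<le>\<^sub>0"
proof
  assume "z - 1 \<in> \<int>\<^sub>\<le>\<^sub>0"
  then obtain m where m: "z - 1 = - of_nat m"
    by (elim nonpos_Ints_cases')
  show False
  proof (cases m)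
    case 0
    then show False using m assms(2) by simp
  next
    case (Suc l)
    then have "z = - of_nat l"
      using m by (simp add: algebra_simps eq_neg_iff_add_eq_0)
    then show False using assms(1) by simp
  qed
qed

lemma prod_list_map_mult:
  "prod_list (map (\<lambda>x. f x * g x) xs) = prod_list (map f xs) * prod_list (map g xs)"
  for f g :: "'a \<Rightarrow> 'b::comm_monoid_mult"
  by (induction xs) (simp_all add: mult_ac)

lemma prod_list_map_update:
  fixes f :: "'a \<Rightarrow> 'b::comm_monoid_mult"
  assumes "i < length xs"
  obtains r where "prod_list (map f xs) = r * f (xs ! i)" "prod_list (map f (xs[i := y])) = r * f y"
proof
  let ?r = "prod_list (map f (take i xs)) * prod_list (map f (drop (Suc i) xs))"
  show "prod_list (map f xs) = ?r * f (xs ! i)"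
    by (subst id_take_nth_drop[OF assms]) (simp add: mult_ac)
  show "prod_list (map f (xs[i := y])) = ?r * f y"
    by (simp add: upd_conv_take_nth_drop[OF assms] mult_ac)
qed

lemma wt_eq_pochhammer:
  assumes "\<forall>a\<in>set as. a \<notin> \<int>\<^sub>\<le>\<^sub>0" "\<forall>b\<in>set bs. b \<notin> \<int>\<^sub>\<le>\<^sub>0"
  shows "wt as bs \<eta> k
           = prod_list (map (\<lambda>a. pochhammer a k) as)
             / (fact k * prod_list (map (\<lambda>b. pochhammer b k) bs)) * \<eta> ^ k"
proof -
  have "Gamma (of_nat k + 1) = (fact k :: complex)"
    using Gamma_fact[of k] by (simp add: add.commute)
  moreover have "prod_list (map (\<lambda>x. poch x (of_nat k)) xs) = prod_list (map (\<lambda>x. pochhammer x k) xs)"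
    if "\<forall>x\<in>set xs. x \<notin> \<int>\<^sub>\<le>\<^sub>0" for xs
    using that by (intro arg_cong[where f = prod_list] map_cong) (simp_all add: poch_of_nat_eq_pochhammer)
  ultimately show ?thesis
    using assms by (simp only: wt_def)
qed

lemma wt_decrement_numerator:
  assumes i: "i < length as" and a: "as ! i - 1 \<notin> \<int>\<^sub>\<le>\<^sub>0"
  shows "wt (as[i := as ! i - 1]) bs \<eta> k * (of_nat k - (1 - as ! i)) = (as ! i - 1) * wt as bs \<eta> k"
proof -
  define a where "a = as ! i"
  obtain r where r: "prod_list (map (\<lambda>x. poch x (of_nat k)) as) = r * poch a (of_nat k)"
    "prod_list (map (\<lambda>x. poch x (of_nat k)) (as[i := a - 1])) = r * poch (a - 1) (of_nat k)"
    using prod_list_map_update[OF i] unfolding a_def by metis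
  have "pochhammer (a - 1) k * (of_nat k - (1 - a)) = pochhammer (a - 1) (Suc k)"
    by (simp add: pochhammer_Suc algebra_simps)
  also have "\<dots> = (a - 1) * pochhammer a k"
    by (simp add: pochhammer_rec)
  moreover have "a \<notin> \<int>\<^sub>\<le>\<^sub>0"
    using a nonpos_Ints_diff_Nats[of a 1] by (auto simp: a_def)
  ultimately have key: "poch (a - 1) (of_nat k) * (of_nat k - (1 - a)) = (a - 1) * poch a (of_nat k)"
    using a by (simp add: poch_of_nat_eq_pochhammer a_def)
  define C where "C = r * inverse (Gamma (of_nat k + 1) * prod_list (map (\<lambda>b. poch b (of_nat k)) bs)) * \<eta> ^ k"
  have "wt (as[i := a - 1]) bs \<eta> k * (of_nat k - (1 - a)) = C * (poch (a - 1) (of_nat k) * (of_nat k - (1 - a)))"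
    unfolding wt_def r C_def divide_inverse by (simp only: ac_simps)
  also have "\<dots> = (a - 1) * wt as bs \<eta> k"
    unfolding key wt_def r C_def divide_inverse by (simp only: ac_simps)
  finally show ?thesis
    by (simp add: a_def)
qed

lemma wt_increment_denominator:
  assumes j: "j < length bs" and b: "bs ! j \<notin> \<int>\<^sub>\<le>\<^sub>0"
  shows "wt as (bs[j := bs ! j + 1]) \<eta> k * (of_nat k - - (bs ! j)) = bs ! j * wt as bs \<eta> k"
proof -
  define b where "b = bs ! j"
  obtain r where r: "prod_list (map (\<lambda>x. poch x (of_nat k)) bs) = r * poch b (of_nat k)"
    "prod_list (map (\<lambda>x. poch x (of_nat k)) (bs[j := b + 1])) = r * poch (b + 1) (of_nat k)"
    using prod_list_map_update[OF j] unfolding b_def by metis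
  have b1: "b + 1 \<notin> \<int>\<^sub>\<le>\<^sub>0"
    using b plus_one_in_nonpos_Ints_imp by (auto simp: b_def)
  have "pochhammer b k \<noteq> 0" "pochhammer (b + 1) k \<noteq> 0"
    using b b1 by (auto simp: pochhammer_eq_0_iff b_def)
  moreover have "pochhammer b k * (b + of_nat k) = b * pochhammer (b + 1) k"
    using pochhammer_Suc[of b k] pochhammer_rec[of b k] by simp
  ultimately have key: "(of_nat k - - b) * inverse (poch (b + 1) (of_nat k)) = b * inverse (poch b (of_nat k))"
    using b b1 by (simp add: poch_of_nat_eq_pochhammer b_def field_simps)
  define C where "C = prod_list (map (\<lambda>a. poch a (of_nat k)) as) * inverse (Gamma (of_nat k + 1)) * inverse r * \<eta> ^ k"
  have "wt as (bs[j := b + 1]) \<eta> k * (of_nat k - - b) = C * ((of_nat k - - b) * inverse (poch (b + 1) (of_nat k)))"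
    unfolding wt_def r C_def divide_inverse inverse_mult_distrib by (simp only: ac_simps)
  also have "\<dots> = b * wt as bs \<eta> k"
    unfolding key wt_def r C_def divide_inverse inverse_mult_distrib by (simp only: ac_simps)
  finally show ?thesis
    by (simp add: b_def)
qed

lemma wt_decrement_all_Suc:
  assumes as: "\<forall>a\<in>set as. a - 1 \<notin> \<int>\<^sub>\<le>\<^sub>0" and bs: "\<forall>b\<in>set bs. b - 1 \<notin> \<int>\<^sub>\<le>\<^sub>0"
  shows "wt (map (\<lambda>a. a - 1) as) (map (\<lambda>b. b - 1) bs) \<eta> (Suc k) * (of_nat k + 1)
           = \<eta> * prod_list (map (\<lambda>a. a - 1) as) / prod_list (map (\<lambda>b. b - 1) bs) * wt as bs \<eta> k"
proof -
  have nonpole: "\<forall>x\<in>set xs. x \<notin> \<int>\<^sub>\<le>\<^sub>0" if "\<forall>x\<in>set xs. x - 1 \<notin> \<int>\<^sub>\<le>\<^sub>0" for xs :: "complex list"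
    using that nonpos_Ints_diff_Nats[of _ 1] by auto
  have shift: "prod_list (map (\<lambda>x. pochhammer x (Suc k)) (map (\<lambda>x. x - 1) xs))
                 = prod_list (map (\<lambda>x. x - 1) xs) * prod_list (map (\<lambda>x. pochhammer x k) xs)"
    for xs :: "complex list"
    by (simp add: pochhammer_rec o_def prod_list_map_mult)
  have shifted: "\<forall>x\<in>set (map (\<lambda>x. x - 1) xs). x \<notin> \<int>\<^sub>\<le>\<^sub>0"
    if "\<forall>x\<in>set xs. x - 1 \<notin> \<int>\<^sub>\<le>\<^sub>0" for xs :: "complex list"
    using that by simp
  define C where "C = \<eta> * prod_list (map (\<lambda>a. a - 1) as) * inverse (prod_list (map (\<lambda>b. b - 1) bs))
    * (prod_list (map (\<lambda>a. pochhammer a k) as)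
       * inverse (fact k * prod_list (map (\<lambda>b. pochhammer b k) bs)) * \<eta> ^ k)"
  have "wt (map (\<lambda>a. a - 1) as) (map (\<lambda>b. b - 1) bs) \<eta> (Suc k) * (of_nat k + 1)
          = C * ((of_nat k + 1) * inverse (of_nat k + 1))"
    unfolding wt_eq_pochhammer[OF shifted[OF as] shifted[OF bs]] shift C_def
      fact_Suc of_nat_Suc divide_inverse inverse_mult_distrib power_Suc
    by (simp only: ac_simps)
  also have "(of_nat k + 1 :: complex) * inverse (of_nat k + 1) = 1"
    by (metis of_nat_Suc of_nat_eq_0_iff nat.distinct(1) add.commute right_inverse)
  finally show ?thesis
    unfolding wt_eq_pochhammer[OF nonpole[OF as] nonpole[OF bs]] C_def divide_inverse by simp
qed

lemma wt_decrement_all_0: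
  assumes "\<forall>a\<in>set as. a - 1 \<notin> \<int>\<^sub>\<le>\<^sub>0" "\<forall>b\<in>set bs. b - 1 \<notin> \<int>\<^sub>\<le>\<^sub>0"
  shows "wt (map (\<lambda>a. a - 1) as) (map (\<lambda>b. b - 1) bs) \<eta> 0 = 1"
  using assms by (simp add: wt_eq_pochhammer map_replicate_const)

lemma OP_wt_decrement_numerator:
  assumes good: "good_weight (wt as bs \<eta>)" and good': "good_weight (wt (as[i := as ! i - 1]) bs \<eta>)"
    and n: "n \<ge> 1" and i: "i < length as" and a: "1 - as ! i \<notin> \<nat>"
    and den: "Qfun (wt as bs \<eta>) (n - 1) (1 - as ! i) \<noteq> 0"
  shows "OP (wt (as[i := as ! i - 1]) bs \<eta>) n
           = OP (wt as bs \<eta>) n - Polynomial.smult (Qfun (wt as bs \<eta>) n (1 - as ! i)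
               / Qfun (wt as bs \<eta>) (n - 1) (1 - as ! i)) (OP (wt as bs \<eta>) (n - 1))"
proof (rule geronimus_OP[OF good good' n _ _ den])
  have "as ! i - 1 \<notin> \<int>\<^sub>\<le>\<^sub>0"
    using a uminus_in_Nats_iff[of "as ! i - 1"] by simp
  then show "wt (as[i := as ! i - 1]) bs \<eta> k * (of_nat k - (1 - as ! i)) = (as ! i - 1) * wt as bs \<eta> k" for k
    by (rule wt_decrement_numerator[OF i])
  show "1 - as ! i \<noteq> of_nat k" for k
    using a by (metis of_nat_in_Nats)
qed

lemma OP_wt_increment_denominator:
  assumes good: "good_weight (wt as bs \<eta>)" and good': "good_weight (wt as (bs[j := bs ! j + 1]) \<eta>)"
    and n: "n \<ge> 1" and j: "j < length bs" and b: "- (bs ! j) \<notin> \<nat>"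
    and den: "Qfun (wt as bs \<eta>) (n - 1) (- (bs ! j)) \<noteq> 0"
  shows "OP (wt as (bs[j := bs ! j + 1]) \<eta>) n
           = OP (wt as bs \<eta>) n - Polynomial.smult (Qfun (wt as bs \<eta>) n (- (bs ! j))
               / Qfun (wt as bs \<eta>) (n - 1) (- (bs ! j))) (OP (wt as bs \<eta>) (n - 1))"
proof (rule geronimus_OP[OF good good' n _ _ den])
  have "bs ! j \<notin> \<int>\<^sub>\<le>\<^sub>0"
    using b uminus_in_Nats_iff[of "bs ! j"] by simp
  then show "wt as (bs[j := bs ! j + 1]) \<eta> k * (of_nat k - - (bs ! j)) = bs ! j * wt as bs \<eta> k" for k
    by (rule wt_increment_denominator[OF j])
  show "- (bs ! j) \<noteq> of_nat k" for k
    using b by (metis of_nat_in_Nats)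
qed

lemma OP_wt_decrement_all:
  fixes as bs :: "complex list" and \<eta> :: complex
  defines "U \<equiv> \<eta> * prod_list (map (\<lambda>a. a - 1) as) / prod_list (map (\<lambda>b. b - 1) bs)"
  assumes good: "good_weight (wt as bs \<eta>)"
    and good': "good_weight (wt (map (\<lambda>a. a - 1) as) (map (\<lambda>b. b - 1) bs) \<eta>)"
    and n: "n \<ge> 1" and as: "\<forall>a\<in>set as. 1 - a \<notin> \<nat>" and bs: "\<forall>b\<in>set bs. - b \<notin> \<nat>"
    and bs_1: "prod_list (map (\<lambda>b. b - 1) bs) \<noteq> 0"
    and den: "U * Qfun (wt as bs \<eta>) (n - 1) (-1) - poly (OP (wt as bs \<eta>) (n - 1)) (-1) \<noteq> 0"
  shows "OP (wt (map (\<lambda>a. a - 1) as) (map (\<lambda>b. b - 1) bs) \<eta>) n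
           = OP (wt as bs \<eta>) n \<circ>\<^sub>p [:-1, 1:]
             - Polynomial.smult ((U * Qfun (wt as bs \<eta>) n (-1) - poly (OP (wt as bs \<eta>) n) (-1))
                 / (U * Qfun (wt as bs \<eta>) (n - 1) (-1) - poly (OP (wt as bs \<eta>) (n - 1)) (-1)))
               (OP (wt as bs \<eta>) (n - 1) \<circ>\<^sub>p [:-1, 1:])"
proof (rule geronimus_shift_OP[OF good good' n _ _ den])
  have as': "\<forall>a\<in>set as. a - 1 \<notin> \<int>\<^sub>\<le>\<^sub>0"
    using as by (simp flip: uminus_in_Nats_iff)
  have bs': "\<forall>b\<in>set bs. b - 1 \<notin> \<int>\<^sub>\<le>\<^sub>0"
  proof
    fix b assume b: "b \<in> set bs"
    then have "b \<notin> \<int>\<^sub>\<le>\<^sub>0"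
      using bs by (simp flip: uminus_in_Nats_iff)
    moreover have "b \<noteq> 1"
      using b bs_1 by (auto simp: prod_list_zero_iff)
    ultimately show "b - 1 \<notin> \<int>\<^sub>\<le>\<^sub>0"
      by (rule diff_one_notin_nonpos_Ints)
  qed
  show "wt (map (\<lambda>a. a - 1) as) (map (\<lambda>b. b - 1) bs) \<eta> 0 = 1"
    by (rule wt_decrement_all_0[OF as' bs'])
  show "wt (map (\<lambda>a. a - 1) as) (map (\<lambda>b. b - 1) bs) \<eta> (Suc k) * (of_nat k + 1) = U * wt as bs \<eta> k" for k
    unfolding U_def by (rule wt_decrement_all_Suc[OF as' bs'])
qed

theorem mainTheorem6:
  fixes as bs :: "complex list" and \<eta> :: complex and n :: nat
  defines "w \<equiv> wt as bs \<eta>"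
    and "Ups \<equiv> \<eta> * prod_list (map (\<lambda>a. a - 1) as) / prod_list (map (\<lambda>b. b - 1) bs)"
  assumes n: "n \<ge> 1"
    and a_cond: "\<forall>i < length as. 1 - as ! i \<notin> \<nat>"
    and b_cond: "\<forall>j < length bs. - (bs ! j) \<notin> \<nat>"
    and good: "good_weight w"
    and good_i: "\<forall>i < length as. good_weight (wt (as[i := as ! i - 1]) bs \<eta>)"
    and good_j: "\<forall>j < length bs. good_weight (wt as (bs[j := bs ! j + 1]) \<eta>)"
    and good_T: "good_weight (wt (map (\<lambda>a. a - 1) as) (map (\<lambda>b. b - 1) bs) \<eta>)"
    and den_i: "\<forall>i < length as. Qfun w (n - 1) (1 - as ! i) \<noteq> 0"
    and den_j: "\<forall>j < length bs. Qfun w (n - 1) (- (bs ! j)) \<noteq> 0"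
    and den_b: "prod_list (map (\<lambda>b. b - 1) bs) \<noteq> 0"
    and den_T: "Ups * Qfun w (n - 1) (-1) - poly (OP w (n - 1)) (-1) \<noteq> 0"
  shows "(\<forall>i < length as. \<forall>z.
            poly (OP (wt (as[i := as ! i - 1]) bs \<eta>) n) z =
            poly (OP w n) z - Qfun w n (1 - as ! i) / Qfun w (n - 1) (1 - as ! i)
                               * poly (OP w (n - 1)) z)
       \<and> (\<forall>j < length bs. \<forall>z.
            poly (OP (wt as (bs[j := bs ! j + 1]) \<eta>) n) z =
            poly (OP w n) z - Qfun w n (- (bs ! j)) / Qfun w (n - 1) (- (bs ! j))
                               * poly (OP w (n - 1)) z)
       \<and> (\<forall>z.
            poly (OP (wt (map (\<lambda>a. a - 1) as) (map (\<lambda>b. b - 1) bs) \<eta>) n) z =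
            poly (OP w n) (z - 1)
              - (Ups * Qfun w n (-1) - poly (OP w n) (-1))
                / (Ups * Qfun w (n - 1) (-1) - poly (OP w (n - 1)) (-1))
                * poly (OP w (n - 1)) (z - 1))"
proof -
  have as: "\<forall>a\<in>set as. 1 - a \<notin> \<nat>" and bs: "\<forall>b\<in>set bs. - b \<notin> \<nat>"
    using a_cond b_cond by (auto simp: in_set_conv_nth)
  have "OP (wt (map (\<lambda>a. a - 1) as) (map (\<lambda>b. b - 1) bs) \<eta>) n
    = OP w n \<circ>\<^sub>p [:-1, 1:]
      - Polynomial.smult ((Ups * Qfun w n (-1) - poly (OP w n) (-1))
          / (Ups * Qfun w (n - 1) (-1) - poly (OP w (n - 1)) (-1))) (OP w (n - 1) \<circ>\<^sub>p [:-1, 1:])"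
    using OP_wt_decrement_all[OF good[unfolded w_def] good_T n as bs den_b den_T[unfolded w_def Ups_def]]
    unfolding w_def Ups_def .
  moreover have "OP (wt (as[i := as ! i - 1]) bs \<eta>) n
    = OP w n - Polynomial.smult (Qfun w n (1 - as ! i) / Qfun w (n - 1) (1 - as ! i)) (OP w (n - 1))"
    if "i < length as" for i
    using good good_i a_cond den_i n that unfolding w_def by (intro OP_wt_decrement_numerator) auto
  moreover have "OP (wt as (bs[j := bs ! j + 1]) \<eta>) n
    = OP w n - Polynomial.smult (Qfun w n (- (bs ! j)) / Qfun w (n - 1) (- (bs ! j))) (OP w (n - 1))"
    if "j < length bs" for j
    using good good_j b_cond den_j n that unfolding w_def by (intro OP_wt_increment_denominator) auto
  ultimately show ?thesis
    by (simp add: poly_pcompose)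
qed

end
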